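(* For any $p>\sqrt{1/2}$ there is $c=c(p)<\infty$ and an oracle routing algorithm between the two roots of $TT_n$ in $TT_{n,p}$ whose average (expected) routing complexity is at most $cn$.
   Context: The double binary tree $TT_n$ is obtained by taking two complete binary trees of uniform depth $n$ and identifying their corresponding leaves; its roots are the roots of the two trees. $TT_{n,p}$ is the random subgraph in which each edge is open independently with probability $p$. An oracle routing algorithm may probe whether any edge of the graph is open (no locality restriction) and outputs an open path between the two given vertices if one exists. Its routing complexity is the number of probes made until a path is found, conditioned on the event that the two vertices are connected by an open path. *)

theory Defs
  imports "HOL-Probability.Probability"
begin

text \<open>A vertex is a pair (t, w): t :: bool names one of
the two trees and w :: bool list is the address of the vertex (root = [],
children of w are w @ [b]).  Vertices at depth n (the leaves) are shared by
the two trees, so they are normalised to tree tag False.\<close>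

type_synonym vertex = "bool \<times> bool list"

definition vert :: "nat \<Rightarrow> bool \<Rightarrow> bool list \<Rightarrow> vertex" where
  "vert n t w = (if length w = n then (False, w) else (t, w))"

definition root :: "nat \<Rightarrow> bool \<Rightarrow> vertex" where
  "root n t = vert n t []"

type_synonym edge = "bool \<times> bool list"

definition edges :: "nat \<Rightarrow> edge set" where
  "edges n = {(t, w). w \<noteq> [] \<and> length w \<le> n}"

definition ends :: "nat \<Rightarrow> edge \<Rightarrow> vertex \<times> vertex" where
  "ends n e = (vert n (fst e) (butlast (snd e)), vert n (fst e) (snd e))"

definition adj :: "nat \<Rightarrow> edge set \<Rightarrow> (vertex \<times> vertex) set" where
  "adj n S = {(a, b). \<exists>e \<in> S \<inter> edges n. ends n e = (a, b) \<or> ends n e = (b, a)}"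

definition roots_connected :: "nat \<Rightarrow> edge set \<Rightarrow> bool" where
  "roots_connected n S \<longleftrightarrow> (root n False, root n True) \<in> (adj n S)\<^sup>*"

definition perc :: "nat \<Rightarrow> real \<Rightarrow> (edge \<Rightarrow> bool) pmf" where
  "perc n p = Pi_pmf (edges n) False (\<lambda>_. bernoulli_pmf p)"

definition open_edges :: "(edge \<Rightarrow> bool) \<Rightarrow> edge set" where
  "open_edges \<omega> = {e. \<omega> e}"

text \<open>An (adaptive, deterministic) oracle algorithm: given the history of probes
and answers so far, it either probes a further edge (Some e) or stops (None).\<close>
type_synonym strategy = "(edge \<times> bool) list \<Rightarrow> edge option"

fun history :: "strategy \<Rightarrow> (edge \<Rightarrow> bool) \<Rightarrow> nat \<Rightarrow> (edge \<times> bool) list" where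
  "history \<sigma> \<omega> 0 = []"
| "history \<sigma> \<omega> (Suc k) =
     (case \<sigma> (history \<sigma> \<omega> k) of
        None \<Rightarrow> history \<sigma> \<omega> k
      | Some e \<Rightarrow> history \<sigma> \<omega> k @ [(e, \<omega> e)])"

definition found :: "nat \<Rightarrow> strategy \<Rightarrow> (edge \<Rightarrow> bool) \<Rightarrow> nat \<Rightarrow> bool" where
  "found n \<sigma> \<omega> k \<longleftrightarrow> roots_connected n {e. (e, True) \<in> set (history \<sigma> \<omega> k)}"

definition routing_cost :: "nat \<Rightarrow> strategy \<Rightarrow> (edge \<Rightarrow> bool) \<Rightarrow> ennreal" where
  "routing_cost n \<sigma> \<omega> =
     (if \<exists>k. found n \<sigma> \<omega> k
      then of_nat (length (history \<sigma> \<omega> (LEAST k. found n \<sigma> \<omega> k)))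
      else \<top>)"

definition expected_routing_cost :: "nat \<Rightarrow> real \<Rightarrow> strategy \<Rightarrow> ennreal" where
  "expected_routing_cost n p \<sigma> =
     (\<integral>\<^sup>+ \<omega>. routing_cost n \<sigma> \<omega> * indicator {\<omega>. roots_connected n (open_edges \<omega>)} \<omega>
        \<partial>measure_pmf (perc n p))
     / emeasure (measure_pmf (perc n p)) {\<omega>. roots_connected n (open_edges \<omega>)}"

end

theory Submission
  imports Defs
begin

text \<open>The search probes the two trees in parallel, looking depth-first for a leaf whose two root
paths are both open. Such a leaf exists whenever the roots are connected: otherwise the labelling
\<open>false_side\<close> is constant along open edges but differs at the two roots. The search enters a
child with probability \<open>p\<^sup>2\<close> and abandons it with probability \<open>f \<le> s = (1 - p\<^sup>2) / p\<^sup>2\<close>, a fixed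
point of \<open>f = 1 - p\<^sup>2 (1 - f\<^sup>2)\<close>. Hence the expected number \<open>T m\<close> of probes below a vertex of
height \<open>m\<close> satisfies \<open>T (m + 1) \<le> (1 + s) (1 + p + p\<^sup>2 T m) = (1 + p) / p\<^sup>2 + T m\<close>, which is linear
in \<open>m\<close> for every \<open>p > 0\<close>. Conditioning on connectivity divides by a probability of at least
\<open>1 - s\<^sup>2\<close>, which is positive exactly when \<open>p\<^sup>2 > 1/2\<close>.\<close>

section \<open>Depth-first search through both trees\<close>

fun double_path :: "bool list \<Rightarrow> nat \<Rightarrow> (edge \<Rightarrow> bool) \<Rightarrow> bool" where
  "double_path w 0 \<omega> = True"
| "double_path w (Suc m) \<omega> =
     ((\<omega> (False, w @ [False]) \<and> \<omega> (True, w @ [False]) \<and> double_path (w @ [False]) m \<omega>) \<or>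
      (\<omega> (False, w @ [True]) \<and> \<omega> (True, w @ [True]) \<and> double_path (w @ [True]) m \<omega>))"

definition double_branch :: "bool list \<Rightarrow> bool \<Rightarrow> nat \<Rightarrow> (edge \<Rightarrow> bool) \<Rightarrow> bool" where
  "double_branch w b m \<omega> \<longleftrightarrow> \<omega> (False, w @ [b]) \<and> \<omega> (True, w @ [b]) \<and> double_path (w @ [b]) m \<omega>"

lemma double_path_Suc:
  "double_path w (Suc m) \<omega> \<longleftrightarrow> double_branch w False m \<omega> \<or> double_branch w True m \<omega>"
  by (simp add: double_branch_def)

fun dfs_probes :: "bool list \<Rightarrow> nat \<Rightarrow> (edge \<Rightarrow> bool) \<Rightarrow> edge list" where
  "dfs_probes w 0 \<omega> = []"
| "dfs_probes w (Suc m) \<omega> =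
     ((False, w @ [False]) # (if \<omega> (False, w @ [False]) then (True, w @ [False]) #
         (if \<omega> (True, w @ [False]) then dfs_probes (w @ [False]) m \<omega> else []) else [])) @
     (if \<omega> (False, w @ [False]) \<and> \<omega> (True, w @ [False]) \<and> double_path (w @ [False]) m \<omega> then []
      else (False, w @ [True]) # (if \<omega> (False, w @ [True]) then (True, w @ [True]) #
         (if \<omega> (True, w @ [True]) then dfs_probes (w @ [True]) m \<omega> else []) else []))"

definition branch_probes :: "bool list \<Rightarrow> bool \<Rightarrow> nat \<Rightarrow> (edge \<Rightarrow> bool) \<Rightarrow> edge list" where
  "branch_probes w b m \<omega> = (False, w @ [b]) # (if \<omega> (False, w @ [b]) then (True, w @ [b]) #
     (if \<omega> (True, w @ [b]) then dfs_probes (w @ [b]) m \<omega> else []) else [])"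

lemma dfs_probes_Suc:
  "dfs_probes w (Suc m) \<omega> =
     branch_probes w False m \<omega> @ (if double_branch w False m \<omega> then [] else branch_probes w True m \<omega>)"
  by (simp add: branch_probes_def double_branch_def)

declare double_path.simps(2) [simp del] dfs_probes.simps(2) [simp del]

definition agree_on :: "'a set \<Rightarrow> ('a \<Rightarrow> 'b) \<Rightarrow> ('a \<Rightarrow> 'b) \<Rightarrow> bool" where
  "agree_on S \<omega> \<omega>' \<longleftrightarrow> (\<forall>e\<in>S. \<omega>' e = \<omega> e)"

lemma double_branch_agree:
  assumes "\<And>\<omega> \<omega>'. agree_on (set (dfs_probes (w @ [b]) m \<omega>)) \<omega> \<omega>' \<Longrightarrow>
             double_path (w @ [b]) m \<omega>' = double_path (w @ [b]) m \<omega>"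
    and "agree_on (set (branch_probes w b m \<omega>)) \<omega> \<omega>'"
  shows "double_branch w b m \<omega>' = double_branch w b m \<omega>"
proof -
  have F: "\<omega>' (False, w @ [b]) = \<omega> (False, w @ [b])"
    using assms(2) by (simp add: agree_on_def branch_probes_def)
  show ?thesis
  proof (cases "\<omega> (False, w @ [b]) \<and> \<omega> (True, w @ [b])")
    case True
    then have "\<omega>' (True, w @ [b]) = \<omega> (True, w @ [b])"
      "agree_on (set (dfs_probes (w @ [b]) m \<omega>)) \<omega> \<omega>'"
      using assms(2) by (auto simp: agree_on_def branch_probes_def)
    then show ?thesis
      using assms(1) F by (simp add: double_branch_def)
  next
    case False
    then show ?thesis
      using assms(2) F by (auto simp: double_branch_def agree_on_def branch_probes_def)
  qed
qed

lemma double_path_agree: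
  "agree_on (set (dfs_probes w m \<omega>)) \<omega> \<omega>' \<Longrightarrow> double_path w m \<omega>' = double_path w m \<omega>"
proof (induction m arbitrary: w \<omega> \<omega>')
  case 0
  then show ?case by simp
next
  case (Suc m)
  have False_branch: "double_branch w False m \<omega>' = double_branch w False m \<omega>"
    using Suc by (intro double_branch_agree) (auto simp: dfs_probes_Suc agree_on_def)
  show ?case
  proof (cases "double_branch w False m \<omega>")
    case True
    then show ?thesis using False_branch by (simp add: double_path_Suc)
  next
    case False
    then have "double_branch w True m \<omega>' = double_branch w True m \<omega>"
      using Suc by (intro double_branch_agree) (auto simp: dfs_probes_Suc agree_on_def)
    then show ?thesis using False_branch by (simp add: double_path_Suc)
  qed
qed

definition nonanticipating :: "(('a \<Rightarrow> 'b) \<Rightarrow> 'a list) \<Rightarrow> bool" where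
  "nonanticipating F \<longleftrightarrow>
     (\<forall>\<omega> \<omega>' k. agree_on (set (take k (F \<omega>))) \<omega> \<omega>' \<longrightarrow> take (Suc k) (F \<omega>') = take (Suc k) (F \<omega>))"

lemma nonanticipating_take_Suc:
  assumes "nonanticipating F" "agree_on (set (take k (F \<omega>))) \<omega> \<omega>'" "k < length (F \<omega>)"
  shows "k < length (F \<omega>')" "F \<omega>' ! k = F \<omega> ! k"
proof -
  have eq: "take (Suc k) (F \<omega>') = take (Suc k) (F \<omega>)"
    using assms(1,2) unfolding nonanticipating_def by blast
  show "k < length (F \<omega>')"
    using arg_cong[OF eq, of length] assms(3) by (auto simp: min_def split: if_splits)
  show "F \<omega>' ! k = F \<omega> ! k"
    using arg_cong[OF eq, of "\<lambda>xs. xs ! k"] by simp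
qed

lemma nonanticipating_agree:
  assumes "nonanticipating F" "agree_on (set (F \<omega>)) \<omega> \<omega>'"
  shows "F \<omega>' = F \<omega>"
proof -
  let ?k = "length (F \<omega>)"
  have "take (Suc ?k) (F \<omega>') = take (Suc ?k) (F \<omega>)"
    using assms unfolding nonanticipating_def by (metis take_all order_refl)
  then have eq: "take (Suc ?k) (F \<omega>') = F \<omega>"
    by simp
  have "length (F \<omega>') = ?k"
    using arg_cong[OF eq, of length] by (auto simp: min_def split: if_splits)
  then show ?thesis
    using eq by simp
qed

lemma nonanticipating_Nil: "nonanticipating (\<lambda>_. [])"
  by (simp add: nonanticipating_def)

lemma nonanticipating_Cons:
  assumes "nonanticipating G" "nonanticipating H"
  shows "nonanticipating (\<lambda>\<omega>. e # (if \<omega> e then G \<omega> else H \<omega>))"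
  unfolding nonanticipating_def
proof (intro allI impI)
  fix \<omega> \<omega>' k
  assume agree: "agree_on (set (take k (e # (if \<omega> e then G \<omega> else H \<omega>)))) \<omega> \<omega>'"
  show "take (Suc k) (e # (if \<omega>' e then G \<omega>' else H \<omega>')) = take (Suc k) (e # (if \<omega> e then G \<omega> else H \<omega>))"
  proof (cases k)
    case (Suc j)
    then have "\<omega>' e = \<omega> e" "agree_on (set (take j (if \<omega> e then G \<omega> else H \<omega>))) \<omega> \<omega>'"
      using agree by (auto simp: agree_on_def)
    then show ?thesis
      using assms Suc unfolding nonanticipating_def by (cases "\<omega> e") auto
  qed simp
qed

lemma nonanticipating_append:
  assumes G: "nonanticipating G" and H: "nonanticipating H"
    and P: "\<And>\<omega> \<omega>'. agree_on (set (G \<omega>)) \<omega> \<omega>' \<Longrightarrow> P \<omega>' = P \<omega>"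
  shows "nonanticipating (\<lambda>\<omega>. G \<omega> @ (if P \<omega> then [] else H \<omega>))"
  unfolding nonanticipating_def
proof (intro allI impI)
  fix \<omega> \<omega>' k
  let ?K = "\<lambda>\<omega>. if P \<omega> then [] else H \<omega>"
  assume agree: "agree_on (set (take k (G \<omega> @ ?K \<omega>))) \<omega> \<omega>'"
  show "take (Suc k) (G \<omega>' @ ?K \<omega>') = take (Suc k) (G \<omega> @ ?K \<omega>)"
  proof (cases "k < length (G \<omega>)")
    case True
    then have agree_G: "agree_on (set (take k (G \<omega>))) \<omega> \<omega>'"
      using agree by simp
    then have "take (Suc k) (G \<omega>') = take (Suc k) (G \<omega>)"
      using G unfolding nonanticipating_def by blast
    moreover have "k < length (G \<omega>')"
      using nonanticipating_take_Suc(1)[OF G agree_G True] .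
    ultimately show ?thesis
      using True by simp
  next
    case False
    then have agree_G: "agree_on (set (G \<omega>)) \<omega> \<omega>'"
      using agree by (simp add: agree_on_def)
    have same: "G \<omega>' = G \<omega>" "P \<omega>' = P \<omega>"
      using nonanticipating_agree[OF G agree_G] P[OF agree_G] by simp_all
    have "agree_on (set (take (k - length (G \<omega>)) (?K \<omega>))) \<omega> \<omega>'"
      using agree False by (auto simp: agree_on_def)
    then have "take (Suc (k - length (G \<omega>))) (?K \<omega>') = take (Suc (k - length (G \<omega>))) (?K \<omega>)"
      using H same(2) unfolding nonanticipating_def by auto
    moreover have "Suc k - length (G \<omega>) = Suc (k - length (G \<omega>))"
      using False by simp
    ultimately show ?thesis using same False by simp
  qed
qed

lemma nonanticipating_dfs_probes: "nonanticipating (dfs_probes w m)"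
proof (induction m arbitrary: w)
  case 0
  then show ?case by (simp add: nonanticipating_Nil)
next
  case (Suc m)
  have branch: "nonanticipating (branch_probes w b m)" for b
    unfolding branch_probes_def by (intro nonanticipating_Cons nonanticipating_Nil Suc.IH)
  have "nonanticipating (\<lambda>\<omega>. branch_probes w False m \<omega> @
          (if double_branch w False m \<omega> then [] else branch_probes w True m \<omega>))"
    using branch branch double_branch_agree[OF double_path_agree]
    by (rule nonanticipating_append)
  then show ?case by (simp add: dfs_probes_Suc)
qed

text \<open>The strategy replays the search on the configuration in which exactly the edges seen open
so far are open; by nonanticipation this yields the next probe of the search on the true
configuration.\<close>

definition dfs_strategy :: "nat \<Rightarrow> strategy" where
  "dfs_strategy n h = (let L = dfs_probes [] n (\<lambda>e. (e, True) \<in> set h) in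
     if length h < length L then Some (L ! length h) else None)"

lemma history_dfs_strategy:
  "history (dfs_strategy n) \<omega> k = map (\<lambda>e. (e, \<omega> e)) (take k (dfs_probes [] n \<omega>))"
proof (induction k)
  case 0
  then show ?case by simp
next
  case (Suc k)
  define L where "L = dfs_probes [] n \<omega>"
  define h where "h = map (\<lambda>e. (e, \<omega> e)) (take k L)"
  define \<omega>\<^sub>h where "\<omega>\<^sub>h = (\<lambda>e. (e, True) \<in> set h)"
  have hist: "history (dfs_strategy n) \<omega> k = h"
    using Suc.IH by (simp add: h_def L_def)
  have agree: "agree_on (set (take k (dfs_probes [] n \<omega>))) \<omega> \<omega>\<^sub>h"
    unfolding agree_on_def \<omega>\<^sub>h_def h_def L_def by auto
  have strategy: "dfs_strategy n h =
      (if length h < length (dfs_probes [] n \<omega>\<^sub>h) then Some (dfs_probes [] n \<omega>\<^sub>h ! length h) else None)"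
    unfolding dfs_strategy_def \<omega>\<^sub>h_def Let_def ..
  show ?case
  proof (cases "k < length L")
    case True
    note probe = nonanticipating_take_Suc[OF nonanticipating_dfs_probes agree True[unfolded L_def]]
    have "length h = k"
      using True by (simp add: h_def)
    then have "dfs_strategy n h = Some (L ! k)"
      using strategy probe by (simp add: L_def)
    then have "history (dfs_strategy n) \<omega> (Suc k) = h @ [(L ! k, \<omega> (L ! k))]"
      using hist by simp
    also have "\<dots> = map (\<lambda>e. (e, \<omega> e)) (take (Suc k) L)"
      using True by (simp add: h_def take_Suc_conv_app_nth)
    finally show ?thesis by (simp add: L_def)
  next
    case False
    then have "dfs_probes [] n \<omega>\<^sub>h = L"
      using nonanticipating_agree[OF nonanticipating_dfs_probes] agree by (simp add: L_def)
    moreover have "length h = length L"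
      using False by (simp add: h_def)
    ultimately have "dfs_strategy n h = None"
      using strategy by simp
    then show ?thesis
      using hist False by (simp add: h_def L_def)
  qed
qed

section \<open>Doubly open leaves and connectivity of the roots\<close>

lemma double_path_probed:
  "double_path w m \<omega> \<Longrightarrow> \<exists>v. length v = m \<and> (\<forall>k t. 0 < k \<and> k \<le> m \<longrightarrow>
     (t, w @ take k v) \<in> set (dfs_probes w m \<omega>) \<and> \<omega> (t, w @ take k v))"
proof (induction m arbitrary: w)
  case 0
  then show ?case by auto
next
  case (Suc m)
  obtain b where branch: "double_branch w b m \<omega>"
    and probes: "set (branch_probes w b m \<omega>) \<subseteq> set (dfs_probes w (Suc m) \<omega>)"
    using Suc.prems by (cases "double_branch w False m \<omega>") (auto simp: double_path_Suc dfs_probes_Suc)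
  have opened: "\<omega> (t, w @ [b])" for t
    using branch by (cases t) (auto simp: double_branch_def)
  from branch have "double_path (w @ [b]) m \<omega>"
    by (simp add: double_branch_def)
  then obtain v where v: "length v = m" and path: "\<forall>k t. 0 < k \<and> k \<le> m \<longrightarrow>
      (t, (w @ [b]) @ take k v) \<in> set (dfs_probes (w @ [b]) m \<omega>) \<and> \<omega> (t, (w @ [b]) @ take k v)"
    using Suc.IH by blast
  have "(t, w @ take k (b # v)) \<in> set (dfs_probes w (Suc m) \<omega>) \<and> \<omega> (t, w @ take k (b # v))"
    if "0 < k" "k \<le> Suc m" for k t
  proof (cases k)
    case (Suc j)
    then show ?thesis
      using that path opened probes by (cases j; cases t) (auto simp: branch_probes_def)
  qed (use that in simp)
  then show ?case
    using v by (intro exI[of _ "b # v"]) auto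
qed

lemma adj_edge:
  assumes "(t, take (Suc k) u) \<in> S" "Suc k \<le> length u" "length u \<le> n"
  shows "(vert n t (take k u), vert n t (take (Suc k) u)) \<in> adj n S"
    and "(vert n t (take (Suc k) u), vert n t (take k u)) \<in> adj n S"
proof -
  have "(t, take (Suc k) u) \<in> S \<inter> edges n"
    using assms by (auto simp: edges_def)
  moreover have "ends n (t, take (Suc k) u) = (vert n t (take k u), vert n t (take (Suc k) u))"
    using assms by (simp add: ends_def butlast_take)
  ultimately show "(vert n t (take k u), vert n t (take (Suc k) u)) \<in> adj n S"
    and "(vert n t (take (Suc k) u), vert n t (take k u)) \<in> adj n S"
    unfolding adj_def by blast+
qed

lemma roots_connected_if_leaf_path:
  assumes len: "length u = n" and path: "\<forall>k t. 0 < k \<and> k \<le> n \<longrightarrow> (t, take k u) \<in> S"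
  shows "roots_connected n S"
proof -
  have down: "(root n False, vert n False (take k u)) \<in> (adj n S)\<^sup>*" if "k \<le> n" for k
    using that
  proof (induction k)
    case (Suc k)
    then have "(vert n False (take k u), vert n False (take (Suc k) u)) \<in> adj n S"
      using adj_edge(1) path len by simp
    then show ?case
      using Suc by (meson Suc_leD rtrancl.rtrancl_into_rtrancl)
  qed (simp add: root_def)
  have up: "(vert n True (take k u), root n True) \<in> (adj n S)\<^sup>*" if "k \<le> n" for k
    using that
  proof (induction k)
    case (Suc k)
    then have "(vert n True (take (Suc k) u), vert n True (take k u)) \<in> adj n S"
      using adj_edge(2) path len by simp
    then show ?case
      using Suc by (meson Suc_leD converse_rtrancl_into_rtrancl)
  qed (simp add: root_def)
  have "vert n False (take n u) = vert n True (take n u)"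
    using len by (simp add: vert_def)
  then show ?thesis
    unfolding roots_connected_def using down[of n] up[of n] by (metis order_refl rtrancl_trans)
qed

lemma roots_connected_if_double_path:
  assumes "double_path [] n \<omega>"
  shows "roots_connected n (open_edges \<omega>)"
proof -
  obtain v where "length v = n" "\<forall>k t. 0 < k \<and> k \<le> n \<longrightarrow> \<omega> (t, take k v)"
    using double_path_probed[OF assms] by auto
  then show ?thesis
    by (intro roots_connected_if_leaf_path) (auto simp: open_edges_def)
qed

lemma routing_cost_le_dfs_probes:
  assumes "double_path [] n \<omega>"
  shows "routing_cost n (dfs_strategy n) \<omega> \<le> length (dfs_probes [] n \<omega>)"
proof -
  define K where "K = length (dfs_probes [] n \<omega>)"
  obtain v where v: "length v = n" and path: "\<forall>k t. 0 < k \<and> k \<le> n \<longrightarrow>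
      (t, take k v) \<in> set (dfs_probes [] n \<omega>) \<and> \<omega> (t, take k v)"
    using double_path_probed[OF assms] by auto
  have "history (dfs_strategy n) \<omega> K = map (\<lambda>e. (e, \<omega> e)) (dfs_probes [] n \<omega>)"
    by (simp add: history_dfs_strategy K_def)
  then have found: "found n (dfs_strategy n) \<omega> K"
    unfolding found_def using path by (intro roots_connected_if_leaf_path[OF v]) auto
  then have "length (history (dfs_strategy n) \<omega> (LEAST k. found n (dfs_strategy n) \<omega> k)) \<le> K"
    using Least_le[of "found n (dfs_strategy n) \<omega>"] by (simp add: history_dfs_strategy K_def)
  then show ?thesis
    using found by (auto simp: routing_cost_def K_def)
qed

definition double_open :: "(edge \<Rightarrow> bool) \<Rightarrow> bool list \<Rightarrow> bool" where
  "double_open \<omega> u \<longleftrightarrow> (\<forall>k. 0 < k \<and> k \<le> length u \<longrightarrow> \<omega> (False, take k u) \<and> \<omega> (True, take k u))"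

lemma double_open_snoc:
  "double_open \<omega> (u @ [x]) \<longleftrightarrow> double_open \<omega> u \<and> \<omega> (False, u @ [x]) \<and> \<omega> (True, u @ [x])"
  by (auto simp: double_open_def less_Suc_eq_le le_Suc_eq)

lemma double_path_if_open:
  "length v = m \<Longrightarrow> \<forall>k. 0 < k \<and> k \<le> m \<longrightarrow> \<omega> (False, w @ take k v) \<and> \<omega> (True, w @ take k v)
   \<Longrightarrow> double_path w m \<omega>"
proof (induction m arbitrary: w v)
  case (Suc m)
  then obtain b v' where v: "v = b # v'"
    by (cases v) auto
  have "double_path (w @ [b]) m \<omega>"
  proof (rule Suc.IH)
    show "length v' = m"
      using Suc.prems(1) v by simp
    show "\<forall>k. 0 < k \<and> k \<le> m \<longrightarrow>
        \<omega> (False, (w @ [b]) @ take k v') \<and> \<omega> (True, (w @ [b]) @ take k v')"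
      using Suc.prems(2) v by (auto dest: spec[of _ "Suc _"])
  qed
  moreover have "\<omega> (False, w @ [b])" "\<omega> (True, w @ [b])"
    using Suc.prems(2) v by (auto elim!: allE[of _ 1])
  ultimately have "double_branch w b m \<omega>"
    by (simp add: double_branch_def)
  then show ?case
    by (cases b) (auto simp: double_path_Suc)
qed simp

text \<open>For the least such \<open>k\<close>, level \<open>k\<close> is the first one at which the two tree paths to \<open>w\<close> are
not both open; the predicate says that there the \<open>True\<close> tree is closed.\<close>

definition closed_true_gap :: "(edge \<Rightarrow> bool) \<Rightarrow> bool list \<Rightarrow> bool" where
  "closed_true_gap \<omega> w \<longleftrightarrow>
     (\<exists>k. 0 < k \<and> k \<le> length w \<and> double_open \<omega> (take (k - 1) w) \<and> \<not> \<omega> (True, take k w))"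

lemma closed_true_gap_snoc:
  "closed_true_gap \<omega> (u @ [x]) \<longleftrightarrow>
     (if double_open \<omega> u then \<not> \<omega> (True, u @ [x]) else closed_true_gap \<omega> u)"
proof
  assume "closed_true_gap \<omega> (u @ [x])"
  then obtain k where k: "0 < k" "k \<le> Suc (length u)" "double_open \<omega> (take (k - 1) (u @ [x]))"
    "\<not> \<omega> (True, take k (u @ [x]))"
    by (auto simp: closed_true_gap_def)
  show "if double_open \<omega> u then \<not> \<omega> (True, u @ [x]) else closed_true_gap \<omega> u"
  proof (cases "k = Suc (length u)")
    case True
    then show ?thesis using k by simp
  next
    case False
    then have "k \<le> length u" "\<not> \<omega> (True, take k u)" "double_open \<omega> (take (k - 1) u)"
      using k by simp_all
    then show ?thesis
      using k(1) by (auto simp: closed_true_gap_def double_open_def)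
  qed
next
  assume gap: "if double_open \<omega> u then \<not> \<omega> (True, u @ [x]) else closed_true_gap \<omega> u"
  show "closed_true_gap \<omega> (u @ [x])"
  proof (cases "double_open \<omega> u")
    case True
    then show ?thesis
      using gap unfolding closed_true_gap_def by (intro exI[of _ "Suc (length u)"]) simp
  next
    case False
    then obtain k where "0 < k" "k \<le> length u" "double_open \<omega> (take (k - 1) u)" "\<not> \<omega> (True, take k u)"
      using gap by (auto simp: closed_true_gap_def)
    then show ?thesis
      unfolding closed_true_gap_def by (intro exI[of _ k]) simp
  qed
qed

definition false_side :: "(edge \<Rightarrow> bool) \<Rightarrow> vertex \<Rightarrow> bool" where
  "false_side \<omega> v \<longleftrightarrow> (if double_open \<omega> (snd v) then \<not> fst v else closed_true_gap \<omega> (snd v))"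

lemma false_side_open_edge:
  assumes "\<omega> (t, u @ [x])"
  shows "false_side \<omega> (t, u @ [x]) = false_side \<omega> (t, u)"
proof (cases "double_open \<omega> u")
  case True
  then show ?thesis
    using assms by (cases t) (simp_all add: false_side_def closed_true_gap_snoc double_open_snoc)
next
  case False
  then show ?thesis
    by (simp add: false_side_def closed_true_gap_snoc double_open_snoc)
qed

lemma false_side_adj:
  assumes no_leaf: "\<forall>u. length u = n \<longrightarrow> \<not> double_open \<omega> u"
    and "(a, b) \<in> adj n (open_edges \<omega>)"
  shows "false_side \<omega> a = false_side \<omega> b"
proof -
  obtain t w where edge: "\<omega> (t, w)" "(t, w) \<in> edges n"
    and ends: "ends n (t, w) = (a, b) \<or> ends n (t, w) = (b, a)"
    using assms(2) unfolding adj_def open_edges_def by auto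
  then have "w \<noteq> []"
    by (simp add: edges_def)
  then obtain u x where w: "w = u @ [x]"
    using rev_exhaust by blast
  have vert: "false_side \<omega> (vert n t v) = false_side \<omega> (t, v)" if "length v \<le> n" for v
    using no_leaf that by (auto simp: vert_def false_side_def)
  have "false_side \<omega> (vert n t u) = false_side \<omega> (vert n t (u @ [x]))"
    using edge w false_side_open_edge[of \<omega> t u x] vert by (simp add: edges_def)
  then show ?thesis
    using ends w by (auto simp: ends_def)
qed

lemma double_open_leaf_if_roots_connected:
  assumes "roots_connected n (open_edges \<omega>)"
  shows "\<exists>u. length u = n \<and> double_open \<omega> u"
proof (rule ccontr)
  assume no_leaf: "\<nexists>u. length u = n \<and> double_open \<omega> u"
  have "double_open \<omega> []"
    by (simp add: double_open_def)
  then have "n \<noteq> 0"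
    using no_leaf by (metis list.size(3))
  then have roots: "false_side \<omega> (root n False)" "\<not> false_side \<omega> (root n True)"
    using \<open>double_open \<omega> []\<close> by (simp_all add: root_def vert_def false_side_def)
  have "false_side \<omega> v" if "(root n False, v) \<in> (adj n (open_edges \<omega>))\<^sup>*" for v
    using that
  proof (induction rule: rtrancl_induct)
    case (step y z)
    then show ?case
      using false_side_adj[of n \<omega> y z] no_leaf by auto
  qed (rule roots(1))
  then show False
    using assms roots(2) by (simp add: roots_connected_def)
qed

lemma roots_connected_iff_double_path:
  "roots_connected n (open_edges \<omega>) \<longleftrightarrow> double_path [] n \<omega>"
proof
  assume "roots_connected n (open_edges \<omega>)"
  then obtain u where "length u = n" "double_open \<omega> u"
    using double_open_leaf_if_roots_connected by blast
  then show "double_path [] n \<omega>"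
    by (intro double_path_if_open[of u]) (simp_all add: double_open_def)
qed (rule roots_connected_if_double_path)

section \<open>Independent edges\<close>

definition depends_only_on :: "'a set \<Rightarrow> (('a \<Rightarrow> 'b) \<Rightarrow> 'c) \<Rightarrow> bool" where
  "depends_only_on J f \<longleftrightarrow> (\<forall>\<omega> \<omega>'. agree_on J \<omega> \<omega>' \<longrightarrow> f \<omega>' = f \<omega>)"

lemma depends_only_on_const: "depends_only_on J (\<lambda>_. c)"
  by (simp add: depends_only_on_def)

lemma depends_only_on_component: "depends_only_on {e} (\<lambda>\<omega>. h (\<omega> e))"
  by (simp add: depends_only_on_def agree_on_def)

lemma depends_only_on_mult:
  fixes f g :: "('a \<Rightarrow> 'b) \<Rightarrow> 'c :: times"
  assumes "depends_only_on A f" "depends_only_on B g"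
  shows "depends_only_on (A \<union> B) (\<lambda>\<omega>. f \<omega> * g \<omega>)"
  unfolding depends_only_on_def
proof (intro allI impI)
  fix \<omega> \<omega>' :: "'a \<Rightarrow> 'b"
  assume "agree_on (A \<union> B) \<omega> \<omega>'"
  then have "agree_on A \<omega> \<omega>'" "agree_on B \<omega> \<omega>'"
    by (simp_all add: agree_on_def)
  then show "f \<omega>' * g \<omega>' = f \<omega> * g \<omega>"
    using assms by (simp add: depends_only_on_def)
qed

lemma nn_integral_Pi_pmf_subset:
  assumes "finite I" "J \<subseteq> I" "depends_only_on J f"
  shows "(\<integral>\<^sup>+\<omega>. f \<omega> \<partial>Pi_pmf I d P) = (\<integral>\<^sup>+\<omega>. f \<omega> \<partial>Pi_pmf J d P)"
proof -
  have "Pi_pmf J d P = map_pmf (\<lambda>\<omega> x. if x \<in> J then \<omega> x else d) (Pi_pmf I d P)"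
    using assms(1,2) by (rule Pi_pmf_subset)
  moreover have "f (\<lambda>x. if x \<in> J then \<omega> x else d) = f \<omega>" for \<omega>
    using assms(3) by (simp add: depends_only_on_def agree_on_def)
  ultimately show ?thesis
    by simp
qed

lemma nn_integral_Pi_pmf_Un_mult:
  fixes f g :: "('a \<Rightarrow> 'b) \<Rightarrow> ennreal"
  assumes "finite A" "finite B" "A \<inter> B = {}" "depends_only_on A f" "depends_only_on B g"
  shows "(\<integral>\<^sup>+\<omega>. f \<omega> * g \<omega> \<partial>Pi_pmf (A \<union> B) d P) =
    (\<integral>\<^sup>+\<omega>. f \<omega> \<partial>Pi_pmf A d P) * (\<integral>\<^sup>+\<omega>. g \<omega> \<partial>Pi_pmf B d P)"
proof -
  let ?glue = "\<lambda>(a, b) x. if x \<in> A then a x else b x"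
  have "Pi_pmf (A \<union> B) d P = map_pmf ?glue (pair_pmf (Pi_pmf A d P) (Pi_pmf B d P))"
    using assms(1-3) by (rule Pi_pmf_union)
  moreover have "f (?glue (a, b)) * g (?glue (a, b)) = f a * g b" for a b
  proof -
    have "agree_on A a (?glue (a, b))" "agree_on B b (?glue (a, b))"
      using assms(3) by (auto simp: agree_on_def)
    then show ?thesis
      using assms(4,5) by (simp add: depends_only_on_def)
  qed
  ultimately have "(\<integral>\<^sup>+\<omega>. f \<omega> * g \<omega> \<partial>Pi_pmf (A \<union> B) d P) =
      (\<integral>\<^sup>+a. \<integral>\<^sup>+b. f a * g b \<partial>Pi_pmf B d P \<partial>Pi_pmf A d P)"
    by (simp add: nn_integral_pair_pmf')
  also have "\<dots> = (\<integral>\<^sup>+\<omega>. f \<omega> \<partial>Pi_pmf A d P) * (\<integral>\<^sup>+\<omega>. g \<omega> \<partial>Pi_pmf B d P)"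
    by (simp add: nn_integral_cmult nn_integral_multc)
  finally show ?thesis .
qed

definition perc_on :: "real \<Rightarrow> edge set \<Rightarrow> (edge \<Rightarrow> bool) pmf" where
  "perc_on p J = Pi_pmf J False (\<lambda>_. bernoulli_pmf p)"

definition subtree_edges :: "bool list \<Rightarrow> nat \<Rightarrow> edge set" where
  "subtree_edges w m = {(t, w @ v) | t v. v \<noteq> [] \<and> length v \<le> m}"

definition branch_edges :: "bool list \<Rightarrow> bool \<Rightarrow> nat \<Rightarrow> edge set" where
  "branch_edges w b m = {(t, w @ b # v) | t v. length v \<le> m}"

lemma nn_integral_perc_on_const: "(\<integral>\<^sup>+\<omega>. c \<partial>perc_on p J) = c"
  by (simp add: measure_pmf.emeasure_space_1)

lemma perc_eq_perc_on: "perc n p = perc_on p (subtree_edges [] n)"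
proof -
  have "edges n = subtree_edges [] n"
    by (auto simp: edges_def subtree_edges_def)
  then show ?thesis
    by (simp add: perc_def perc_on_def)
qed

lemma finite_subtree_edges: "finite (subtree_edges w m)"
proof -
  have "subtree_edges w m \<subseteq> (\<lambda>(t, v). (t, w @ v)) ` (UNIV \<times> {v. set v \<subseteq> UNIV \<and> length v \<le> m})"
    by (auto simp: subtree_edges_def)
  moreover have "finite ((UNIV :: bool set) \<times> {v :: bool list. set v \<subseteq> UNIV \<and> length v \<le> m})"
    by (intro finite_SigmaI finite_lists_length_le) simp_all
  ultimately show ?thesis
    using finite_subset by blast
qed

lemma branch_edges_eq:
  "branch_edges w b m = insert (False, w @ [b]) (insert (True, w @ [b]) (subtree_edges (w @ [b]) m))"
proof (intro set_eqI iffI)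
  fix e
  assume "e \<in> branch_edges w b m"
  then obtain t v where e: "e = (t, w @ b # v)" "length v \<le> m"
    by (auto simp: branch_edges_def)
  then show "e \<in> insert (False, w @ [b]) (insert (True, w @ [b]) (subtree_edges (w @ [b]) m))"
    by (cases v; cases t) (auto simp: subtree_edges_def)
next
  fix e
  have mem: "(t, w @ b # v) \<in> branch_edges w b m" if "length v \<le> m" for t v
    using that by (auto simp: branch_edges_def)
  assume "e \<in> insert (False, w @ [b]) (insert (True, w @ [b]) (subtree_edges (w @ [b]) m))"
  then show "e \<in> branch_edges w b m"
  proof (elim insertE)
    assume "e \<in> subtree_edges (w @ [b]) m"
    then obtain t v where "e = (t, w @ b # v)" "length v \<le> m"
      by (auto simp: subtree_edges_def)
    then show ?thesis
      using mem by simp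
  qed (use mem[of "[]"] in simp_all)
qed

lemma finite_branch_edges: "finite (branch_edges w b m)"
  by (simp add: branch_edges_eq finite_subtree_edges)

lemma subtree_edges_Suc: "subtree_edges w (Suc m) = branch_edges w False m \<union> branch_edges w True m"
proof (intro set_eqI iffI)
  fix e
  assume "e \<in> subtree_edges w (Suc m)"
  then obtain t b v where "e = (t, w @ b # v)" "length v \<le> m"
    by (auto simp: subtree_edges_def neq_Nil_conv)
  then show "e \<in> branch_edges w False m \<union> branch_edges w True m"
    by (cases b) (auto simp: branch_edges_def)
next
  fix e
  assume "e \<in> branch_edges w False m \<union> branch_edges w True m"
  then show "e \<in> subtree_edges w (Suc m)"
    by (auto simp: branch_edges_def subtree_edges_def)
qed

lemma branch_edges_disjoint: "branch_edges w False m \<inter> branch_edges w True m = {}"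
  by (auto simp: branch_edges_def)

lemma subtree_edges_agree:
  "agree_on (subtree_edges w m) \<omega> \<omega>' \<Longrightarrow>
     double_path w m \<omega>' = double_path w m \<omega> \<and> dfs_probes w m \<omega>' = dfs_probes w m \<omega>"
proof (induction m arbitrary: w)
  case (Suc m)
  have branch: "agree_on (branch_edges w b m) \<omega> \<omega>'" for b
    using Suc.prems by (cases b) (auto simp: agree_on_def subtree_edges_Suc)
  then have "\<omega>' (t, w @ [b]) = \<omega> (t, w @ [b])" for t b
    by (cases t) (auto simp: agree_on_def branch_edges_eq)
  moreover have "double_path (w @ [b]) m \<omega>' = double_path (w @ [b]) m \<omega>"
    "dfs_probes (w @ [b]) m \<omega>' = dfs_probes (w @ [b]) m \<omega>" for b
    using Suc.IH branch by (auto simp: agree_on_def branch_edges_eq)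
  ultimately show ?case
    by (simp add: double_path.simps(2) dfs_probes.simps(2))
qed simp

lemma depends_only_on_subtree_edges:
  "depends_only_on (subtree_edges w m) (\<lambda>\<omega>. F (double_path w m \<omega>) (dfs_probes w m \<omega>))"
  by (simp add: depends_only_on_def subtree_edges_agree)

lemma depends_only_on_branch_edges:
  "depends_only_on (branch_edges w b m) (\<lambda>\<omega>. F (double_branch w b m \<omega>) (branch_probes w b m \<omega>))"
proof -
  have "double_branch w b m \<omega>' = double_branch w b m \<omega> \<and> branch_probes w b m \<omega>' = branch_probes w b m \<omega>"
    if agree: "agree_on (branch_edges w b m) \<omega> \<omega>'" for \<omega> \<omega>'
  proof -
    have "\<omega>' (t, w @ [b]) = \<omega> (t, w @ [b])" for t
      using agree by (cases t) (auto simp: agree_on_def branch_edges_eq)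
    moreover have "agree_on (subtree_edges (w @ [b]) m) \<omega> \<omega>'"
      using agree by (auto simp: agree_on_def branch_edges_eq)
    ultimately show ?thesis
      using subtree_edges_agree by (simp add: double_branch_def branch_probes_def)
  qed
  then show ?thesis
    by (simp add: depends_only_on_def)
qed

lemma nn_integral_branch_edges:
  assumes "depends_only_on (subtree_edges (w @ [b]) m) f"
  shows "(\<integral>\<^sup>+\<omega>. h\<^sub>F (\<omega> (False, w @ [b])) * (h\<^sub>T (\<omega> (True, w @ [b])) * f \<omega>) \<partial>perc_on p (branch_edges w b m)) =
    (\<integral>\<^sup>+x. h\<^sub>F x \<partial>bernoulli_pmf p) * ((\<integral>\<^sup>+x. h\<^sub>T x \<partial>bernoulli_pmf p) *
      (\<integral>\<^sup>+\<omega>. f \<omega> \<partial>perc_on p (subtree_edges (w @ [b]) m)))"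
proof -
  let ?F = "(False, w @ [b])" and ?T = "(True, w @ [b])" and ?D = "subtree_edges (w @ [b]) m"
  have split: "branch_edges w b m = {?F} \<union> ({?T} \<union> ?D)"
    by (auto simp: branch_edges_eq)
  have fresh: "?F \<notin> {?T} \<union> ?D" "?T \<notin> ?D"
    by (auto simp: subtree_edges_def)
  have "depends_only_on ({?T} \<union> ?D) (\<lambda>\<omega>. h\<^sub>T (\<omega> ?T) * f \<omega>)"
    using depends_only_on_component assms by (rule depends_only_on_mult)
  then have "(\<integral>\<^sup>+\<omega>. h\<^sub>F (\<omega> ?F) * (h\<^sub>T (\<omega> ?T) * f \<omega>) \<partial>perc_on p ({?F} \<union> ({?T} \<union> ?D))) =
      (\<integral>\<^sup>+\<omega>. h\<^sub>F (\<omega> ?F) \<partial>perc_on p {?F}) * (\<integral>\<^sup>+\<omega>. h\<^sub>T (\<omega> ?T) * f \<omega> \<partial>perc_on p ({?T} \<union> ?D))"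
    unfolding perc_on_def using fresh finite_subtree_edges
    by (intro nn_integral_Pi_pmf_Un_mult depends_only_on_component) auto
  also have "(\<integral>\<^sup>+\<omega>. h\<^sub>T (\<omega> ?T) * f \<omega> \<partial>perc_on p ({?T} \<union> ?D)) =
      (\<integral>\<^sup>+\<omega>. h\<^sub>T (\<omega> ?T) \<partial>perc_on p {?T}) * (\<integral>\<^sup>+\<omega>. f \<omega> \<partial>perc_on p ?D)"
    unfolding perc_on_def using fresh finite_subtree_edges
    by (intro nn_integral_Pi_pmf_Un_mult depends_only_on_component assms) auto
  finally show ?thesis
    unfolding split by (simp add: perc_on_def Pi_pmf_singleton)
qed

section \<open>Failure probability and expected number of probes\<close>

definition fail_prob :: "real \<Rightarrow> bool list \<Rightarrow> nat \<Rightarrow> ennreal" where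
  "fail_prob p w m = (\<integral>\<^sup>+\<omega>. of_bool (\<not> double_path w m \<omega>) \<partial>perc_on p (subtree_edges w m))"

definition expected_probes :: "real \<Rightarrow> bool list \<Rightarrow> nat \<Rightarrow> ennreal" where
  "expected_probes p w m = (\<integral>\<^sup>+\<omega>. of_nat (length (dfs_probes w m \<omega>)) \<partial>perc_on p (subtree_edges w m))"

definition branch_fail_prob :: "real \<Rightarrow> bool list \<Rightarrow> bool \<Rightarrow> nat \<Rightarrow> ennreal" where
  "branch_fail_prob p w b m =
     (\<integral>\<^sup>+\<omega>. of_bool (\<not> double_branch w b m \<omega>) \<partial>perc_on p (branch_edges w b m))"

definition expected_branch_probes :: "real \<Rightarrow> bool list \<Rightarrow> bool \<Rightarrow> nat \<Rightarrow> ennreal" where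
  "expected_branch_probes p w b m =
     (\<integral>\<^sup>+\<omega>. of_nat (length (branch_probes w b m \<omega>)) \<partial>perc_on p (branch_edges w b m))"

lemma nn_integral_subtree_edges_Suc:
  assumes "depends_only_on (branch_edges w False m) f" "depends_only_on (branch_edges w True m) g"
  shows "(\<integral>\<^sup>+\<omega>. f \<omega> * g \<omega> \<partial>perc_on p (subtree_edges w (Suc m))) =
    (\<integral>\<^sup>+\<omega>. f \<omega> \<partial>perc_on p (branch_edges w False m)) * (\<integral>\<^sup>+\<omega>. g \<omega> \<partial>perc_on p (branch_edges w True m))"
  unfolding subtree_edges_Suc perc_on_def
  by (intro nn_integral_Pi_pmf_Un_mult finite_branch_edges branch_edges_disjoint assms)

lemma fail_prob_Suc:
  "fail_prob p w (Suc m) = branch_fail_prob p w False m * branch_fail_prob p w True m"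
proof -
  have "of_bool (\<not> double_path w (Suc m) \<omega>) =
      (of_bool (\<not> double_branch w False m \<omega>) * of_bool (\<not> double_branch w True m \<omega>) :: ennreal)" for \<omega>
    by (simp add: double_path_Suc)
  then show ?thesis
    unfolding fail_prob_def branch_fail_prob_def
    by (simp add: nn_integral_subtree_edges_Suc depends_only_on_branch_edges[where F = "\<lambda>d _. of_bool (\<not> d)"])
qed

lemma expected_probes_Suc:
  "expected_probes p w (Suc m) =
     expected_branch_probes p w False m + branch_fail_prob p w False m * expected_branch_probes p w True m"
proof -
  let ?D = "perc_on p (subtree_edges w (Suc m))"
  have "of_nat (length (dfs_probes w (Suc m) \<omega>)) =
      of_nat (length (branch_probes w False m \<omega>)) +
      of_bool (\<not> double_branch w False m \<omega>) * (of_nat (length (branch_probes w True m \<omega>)) :: ennreal)" for \<omega>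
    by (simp add: dfs_probes_Suc)
  then have "expected_probes p w (Suc m) =
      (\<integral>\<^sup>+\<omega>. of_nat (length (branch_probes w False m \<omega>)) \<partial>?D) +
      (\<integral>\<^sup>+\<omega>. of_bool (\<not> double_branch w False m \<omega>) * of_nat (length (branch_probes w True m \<omega>)) \<partial>?D)"
    by (simp add: expected_probes_def nn_integral_add)
  also have "(\<integral>\<^sup>+\<omega>. of_nat (length (branch_probes w False m \<omega>)) \<partial>?D) = expected_branch_probes p w False m"
    unfolding expected_branch_probes_def perc_on_def subtree_edges_Suc
    by (intro nn_integral_Pi_pmf_subset depends_only_on_branch_edges) (auto simp: finite_branch_edges)
  also have "(\<integral>\<^sup>+\<omega>. of_bool (\<not> double_branch w False m \<omega>) * of_nat (length (branch_probes w True m \<omega>)) \<partial>?D) =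
      branch_fail_prob p w False m * expected_branch_probes p w True m"
    unfolding branch_fail_prob_def expected_branch_probes_def
    by (intro nn_integral_subtree_edges_Suc depends_only_on_branch_edges)
  finally show ?thesis .
qed

lemma branch_fail_prob_eq:
  assumes "0 \<le> p" "p \<le> 1"
  shows "branch_fail_prob p w b m =
    ennreal (1 - p) + ennreal p * (ennreal (1 - p) + ennreal p * fail_prob p (w @ [b]) m)"
proof -
  let ?F = "(False, w @ [b])" and ?T = "(True, w @ [b])" and ?A = "perc_on p (branch_edges w b m)"
  let ?fail = "\<lambda>\<omega>. of_bool (\<not> double_path (w @ [b]) m \<omega>) :: ennreal"
  have F_closed: "(\<integral>\<^sup>+\<omega>. of_bool (\<not> \<omega> ?F) \<partial>?A) = ennreal (1 - p)"
    using nn_integral_branch_edges[where h\<^sub>F = "\<lambda>x. of_bool (\<not> x)" and h\<^sub>T = "\<lambda>_. 1",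
        OF depends_only_on_const[where c = 1]] assms
    by (simp add: nn_integral_perc_on_const)
  have T_closed: "(\<integral>\<^sup>+\<omega>. of_bool (\<omega> ?F) * of_bool (\<not> \<omega> ?T) \<partial>?A) = ennreal p * ennreal (1 - p)"
    using nn_integral_branch_edges[where h\<^sub>F = "\<lambda>x. of_bool x" and h\<^sub>T = "\<lambda>x. of_bool (\<not> x)",
        OF depends_only_on_const[where c = 1]] assms
    by (simp add: nn_integral_perc_on_const)
  have below: "(\<integral>\<^sup>+\<omega>. of_bool (\<omega> ?F) * (of_bool (\<omega> ?T) * ?fail \<omega>) \<partial>?A) =
      ennreal p * (ennreal p * fail_prob p (w @ [b]) m)"
    using nn_integral_branch_edges[where h\<^sub>F = "\<lambda>x. of_bool x" and h\<^sub>T = "\<lambda>x. of_bool x",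
        OF depends_only_on_subtree_edges[where F = "\<lambda>d _. of_bool (\<not> d)"]] assms
    by (simp add: fail_prob_def)
  have "of_bool (\<not> double_branch w b m \<omega>) =
      of_bool (\<not> \<omega> ?F) + (of_bool (\<omega> ?F) * of_bool (\<not> \<omega> ?T) +
      of_bool (\<omega> ?F) * (of_bool (\<omega> ?T) * ?fail \<omega>))" for \<omega>
    by (simp add: double_branch_def)
  then have "branch_fail_prob p w b m =
      (\<integral>\<^sup>+\<omega>. of_bool (\<not> \<omega> ?F) \<partial>?A) + ((\<integral>\<^sup>+\<omega>. of_bool (\<omega> ?F) * of_bool (\<not> \<omega> ?T) \<partial>?A) +
      (\<integral>\<^sup>+\<omega>. of_bool (\<omega> ?F) * (of_bool (\<omega> ?T) * ?fail \<omega>) \<partial>?A))"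
    by (simp add: branch_fail_prob_def nn_integral_add)
  then show ?thesis
    unfolding F_closed T_closed below by (simp add: distrib_left)
qed

lemma expected_branch_probes_eq:
  assumes "0 \<le> p" "p \<le> 1"
  shows "expected_branch_probes p w b m = 1 + ennreal p * (1 + ennreal p * expected_probes p (w @ [b]) m)"
proof -
  let ?F = "(False, w @ [b])" and ?T = "(True, w @ [b])" and ?A = "perc_on p (branch_edges w b m)"
  let ?probes = "\<lambda>\<omega>. of_nat (length (dfs_probes (w @ [b]) m \<omega>)) :: ennreal"
  have F_open: "(\<integral>\<^sup>+\<omega>. of_bool (\<omega> ?F) \<partial>?A) = ennreal p"
    using nn_integral_branch_edges[where h\<^sub>F = "\<lambda>x. of_bool x" and h\<^sub>T = "\<lambda>_. 1",
        OF depends_only_on_const[where c = 1]] assms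
    by (simp add: nn_integral_perc_on_const)
  have below: "(\<integral>\<^sup>+\<omega>. of_bool (\<omega> ?F) * (of_bool (\<omega> ?T) * ?probes \<omega>) \<partial>?A) =
      ennreal p * (ennreal p * expected_probes p (w @ [b]) m)"
    using nn_integral_branch_edges[where h\<^sub>F = "\<lambda>x. of_bool x" and h\<^sub>T = "\<lambda>x. of_bool x",
        OF depends_only_on_subtree_edges[where F = "\<lambda>_ d. of_nat (length d)"]] assms
    by (simp add: expected_probes_def)
  have "of_nat (length (branch_probes w b m \<omega>)) =
      1 + (of_bool (\<omega> ?F) + of_bool (\<omega> ?F) * (of_bool (\<omega> ?T) * ?probes \<omega>))" for \<omega>
    by (simp add: branch_probes_def)
  then have "expected_branch_probes p w b m =
      1 + ((\<integral>\<^sup>+\<omega>. of_bool (\<omega> ?F) \<partial>?A) + (\<integral>\<^sup>+\<omega>. of_bool (\<omega> ?F) * (of_bool (\<omega> ?T) * ?probes \<omega>) \<partial>?A))"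
    by (simp add: expected_branch_probes_def nn_integral_add nn_integral_perc_on_const)
  then show ?thesis
    unfolding F_open below by (simp add: distrib_left)
qed

lemma ennreal_add_mult_le:
  assumes "A \<le> ennreal a" "B \<le> ennreal b" "C \<le> ennreal c" "0 \<le> a" "0 \<le> b" "0 \<le> c"
  shows "A + B * C \<le> ennreal (a + b * c)"
proof -
  have "A + B * C \<le> ennreal a + ennreal b * ennreal c"
    using assms(1-3) by (intro add_mono mult_mono) auto
  also have "\<dots> = ennreal (a + b * c)"
    using assms(4-6) by (simp add: ennreal_mult)
  finally show ?thesis .
qed

definition branch_fail_bound :: "real \<Rightarrow> real" where
  "branch_fail_bound p = (1 - p\<^sup>2) / p\<^sup>2"

lemma branch_fail_bound_nonneg: "0 < p \<Longrightarrow> p \<le> 1 \<Longrightarrow> 0 \<le> branch_fail_bound p"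
  by (simp add: branch_fail_bound_def power_le_one)

lemma branch_fail_bound_fixed_point:
  "p \<noteq> 0 \<Longrightarrow> (1 - p) + p * ((1 - p) + p * (branch_fail_bound p)\<^sup>2) = branch_fail_bound p"
  by (simp add: branch_fail_bound_def field_simps power2_eq_square)

lemma branch_fail_prob_le:
  assumes "0 < p" "p \<le> 1" "fail_prob p (w @ [b]) m \<le> ennreal ((branch_fail_bound p)\<^sup>2)"
  shows "branch_fail_prob p w b m \<le> ennreal (branch_fail_bound p)"
proof -
  have "branch_fail_prob p w b m \<le> ennreal ((1 - p) + p * ((1 - p) + p * (branch_fail_bound p)\<^sup>2))"
    unfolding branch_fail_prob_eq[OF less_imp_le[OF assms(1)] assms(2)]
    using assms by (intro ennreal_add_mult_le) auto
  then show ?thesis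
    using assms(1) by (simp add: branch_fail_bound_fixed_point)
qed

lemma fail_prob_le:
  assumes "0 < p" "p \<le> 1"
  shows "fail_prob p w m \<le> ennreal ((branch_fail_bound p)\<^sup>2)"
proof (induction m arbitrary: w)
  case 0
  then show ?case by (simp add: fail_prob_def)
next
  case (Suc m)
  have "branch_fail_prob p w b m \<le> ennreal (branch_fail_bound p)" for b
    using branch_fail_prob_le[OF assms Suc.IH] .
  then have "fail_prob p w (Suc m) \<le> ennreal (branch_fail_bound p) * ennreal (branch_fail_bound p)"
    by (simp add: fail_prob_Suc mult_mono)
  then show ?case
    using branch_fail_bound_nonneg[OF assms] by (simp add: ennreal_mult power2_eq_square)
qed

lemma expected_probes_le:
  assumes "0 < p" "p \<le> 1"
  shows "expected_probes p w m \<le> ennreal ((1 + p) / p\<^sup>2 * m)"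
proof (induction m arbitrary: w)
  case 0
  then show ?case by (simp add: expected_probes_def)
next
  case (Suc m)
  define x where "x = 1 + p * (1 + p * ((1 + p) / p\<^sup>2 * m))"
  have "0 \<le> x"
    using assms by (simp add: x_def)
  have branch: "expected_branch_probes p w b m \<le> ennreal x" for b
    unfolding expected_branch_probes_eq[OF less_imp_le[OF assms(1)] assms(2)] x_def
    using assms Suc.IH by (intro ennreal_add_mult_le) auto
  have "expected_probes p w (Suc m) \<le> ennreal (x + branch_fail_bound p * x)"
    unfolding expected_probes_Suc
    using branch branch_fail_prob_le[OF assms fail_prob_le[OF assms]] branch_fail_bound_nonneg[OF assms] \<open>0 \<le> x\<close>
    by (intro ennreal_add_mult_le) auto
  also have "x + branch_fail_bound p * x = (1 + p) / p\<^sup>2 * Suc m"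
    using assms(1) by (simp add: x_def branch_fail_bound_def field_simps power2_eq_square)
  finally show ?case .
qed

lemma prob_roots_connected_ge:
  assumes "0 < p" "p \<le> 1"
  shows "ennreal (1 - (branch_fail_bound p)\<^sup>2) \<le>
    emeasure (measure_pmf (perc n p)) {\<omega>. roots_connected n (open_edges \<omega>)}"
proof -
  let ?M = "measure_pmf (perc n p)" and ?C = "{\<omega>. roots_connected n (open_edges \<omega>)}"
  have "emeasure ?M (space ?M - ?C) = fail_prob p [] n"
    by (simp flip: nn_integral_indicator add: fail_prob_def perc_eq_perc_on
        roots_connected_iff_double_path indicator_def)
  then have "ennreal (measure ?M (space ?M - ?C)) \<le> ennreal ((branch_fail_bound p)\<^sup>2)"
    using fail_prob_le[OF assms, of "[]" n] by (simp add: measure_pmf.emeasure_eq_measure)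
  then have "measure ?M (space ?M - ?C) \<le> (branch_fail_bound p)\<^sup>2"
    by simp
  then have "1 - (branch_fail_bound p)\<^sup>2 \<le> measure ?M ?C"
    using measure_pmf.prob_compl[where A = ?C] by simp
  then show ?thesis
    by (simp add: measure_pmf.emeasure_eq_measure)
qed

lemma nn_integral_routing_cost_le:
  assumes "0 < p" "p \<le> 1"
  shows "(\<integral>\<^sup>+\<omega>. routing_cost n (dfs_strategy n) \<omega> * indicator {\<omega>. roots_connected n (open_edges \<omega>)} \<omega>
    \<partial>perc n p) \<le> ennreal ((1 + p) / p\<^sup>2 * n)"
proof -
  have "(\<integral>\<^sup>+\<omega>. routing_cost n (dfs_strategy n) \<omega> * indicator {\<omega>. roots_connected n (open_edges \<omega>)} \<omega>
      \<partial>perc n p) \<le> expected_probes p [] n"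
    unfolding expected_probes_def perc_eq_perc_on
    by (intro nn_integral_mono)
      (simp add: roots_connected_iff_double_path routing_cost_le_dfs_probes split: split_indicator)
  also have "\<dots> \<le> ennreal ((1 + p) / p\<^sup>2 * n)"
    using assms by (rule expected_probes_le)
  finally show ?thesis .
qed

lemma expected_routing_cost_dfs_strategy_le:
  assumes "0 < p" "p \<le> 1" "branch_fail_bound p < 1"
  shows "expected_routing_cost n p (dfs_strategy n) \<le>
    ennreal ((1 + p) / p\<^sup>2 / (1 - (branch_fail_bound p)\<^sup>2) * n)"
  unfolding expected_routing_cost_def
proof (rule divide_le_posI_ennreal)
  let ?conn = "emeasure (measure_pmf (perc n p)) {\<omega>. roots_connected n (open_edges \<omega>)}"
  let ?c = "(1 + p) / p\<^sup>2 / (1 - (branch_fail_bound p)\<^sup>2)"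
  have "0 < 1 - (branch_fail_bound p)\<^sup>2"
    using assms branch_fail_bound_nonneg[OF assms(1,2)] by (simp add: power_less_one_iff)
  have conn: "ennreal (1 - (branch_fail_bound p)\<^sup>2) \<le> ?conn"
    using assms(1,2) by (rule prob_roots_connected_ge)
  have "0 < ennreal (1 - (branch_fail_bound p)\<^sup>2)"
    using \<open>0 < 1 - (branch_fail_bound p)\<^sup>2\<close> by simp
  then show "0 < ?conn"
    using conn by (rule order_less_le_trans)
  have "ennreal ((1 + p) / p\<^sup>2 * n) = ennreal (1 - (branch_fail_bound p)\<^sup>2) * ennreal (?c * n)"
    using \<open>0 < 1 - (branch_fail_bound p)\<^sup>2\<close> by (simp flip: ennreal_mult')
  also have "\<dots> \<le> ?conn * ennreal (?c * n)"
    using conn by (rule mult_right_mono) simp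
  finally show "(\<integral>\<^sup>+\<omega>. routing_cost n (dfs_strategy n) \<omega> * indicator {\<omega>. roots_connected n (open_edges \<omega>)} \<omega>
      \<partial>perc n p) \<le> ?conn * ennreal (?c * n)"
    using nn_integral_routing_cost_le[OF assms(1,2)] by (rule order_trans[rotated])
qed

theorem mainTheorem7:
  fixes p :: real
  assumes "p > sqrt (1/2)" and "p \<le> 1"
  shows "\<exists>c::real. \<forall>n::nat. \<exists>\<sigma>::strategy.
           expected_routing_cost n p \<sigma> \<le> ennreal (c * real n)"
proof -
  have "0 < p"
    using assms(1) real_sqrt_gt_zero[of "1/2"] by linarith
  have "sqrt (1/2) ^ 2 < p\<^sup>2"
    using assms(1) by (intro power_strict_mono) auto
  then have "branch_fail_bound p < 1"
    using \<open>0 < p\<close> by (simp add: branch_fail_bound_def divide_less_eq)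
  then show ?thesis
    using expected_routing_cost_dfs_strategy_le[OF \<open>0 < p\<close> assms(2)] by blast
qed

end
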